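(* For two finite subsets $E,F\subseteq\mathbb{N}$ with $\min\{|E|,|F|\}\ge2$, we have $\mathcal{F}_E\subseteq\mathcal{F}_F$ if and only if $A_F\subseteq A_E$, $\Pi_F\setminus\{2\}\subseteq\Pi_E$, and $\alpha_E(p)=\alpha_F(p)$ for all $p\in A_F\setminus\Pi_E$.
   Context: $\mathbb{N}=\{1,2,\dots\}$, $\mathbb{N}_0=\{0\}\cup\mathbb{N}$, $\Pi$ the set of primes, $\Pi_z$ the set of prime divisors of $z$; $\{0,k\}+p\mathbb{Z}=p\mathbb{Z}\cup(k+p\mathbb{Z})$. The Kirch topology $\tau_K$ on $\mathbb{N}$ is generated by the base of all $a+b\mathbb{N}_0=\{a+bn:n\in\mathbb{N}_0\}$ with $a,b\in\mathbb{N}$ coprime and $b$ square-free. Closures $\overline{U}$ are in $\tau_K$; $\tau_x=\{U\in\tau_K:x\in U\}$. For finite $E\subseteq\mathbb{N}$, $\mathcal{F}_E=\{B\subseteq\mathbb{N}:\exists (U_x)_{x\in E}\in\prod_{x\in E}\tau_x\ (\bigcap_{x\in E}\overline{U_x}\subseteq B)\}$. For nonempty finite $E$: $\Pi_E=\bigcap_{z\in E}\Pi_z$; $A_E=\{p\in\Pi:\exists k\in\mathbb{N}\ (E\subseteq\{0,k\}+p\mathbb{Z})\}$; $\alpha_E:A_E\to\mathbb{N}_0$ is the unique function with $0\le\alpha_E(p)<p$ and $E\subseteq\{0,\alpha_E(p)\}+p\mathbb{Z}$ for all $p\in A_E$, $\alpha_E(2)=1$, and $\alpha_E(p)=0$ for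 $p\in\Pi_E\setminus\{2\}$. *)

theory Defs
  imports "HOL-Analysis.Analysis" "HOL-Computational_Algebra.Squarefree"
begin

text \<open>Positive naturals N = {1,2,...} are represented as the subset {1..} of nat.\<close>

definition arith_prog :: "nat \<Rightarrow> nat \<Rightarrow> nat set" where
  "arith_prog a b = {a + b * n | n. True}"

definition kirch_base :: "nat set set" where
  "kirch_base = {arith_prog a b | a b. a \<ge> 1 \<and> b \<ge> 1 \<and> coprime a b \<and> squarefree b}"

definition kirch_topology :: "nat topology" where
  "kirch_topology = topology_generated_by kirch_base"

definition tau_at :: "nat \<Rightarrow> nat set set" where
  "tau_at x = {U. openin kirch_topology U \<and> x \<in> U}"

definition filterF :: "nat set \<Rightarrow> nat set set" where
  "filterF E = {B. B \<subseteq> {1..} \<and>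
     (\<exists>U. (\<forall>x\<in>E. U x \<in> tau_at x) \<and> (\<Inter>x\<in>E. kirch_topology closure_of (U x)) \<subseteq> B)}"

definition PiE_set :: "nat set \<Rightarrow> nat set" where
  "PiE_set E = (\<Inter>z\<in>E. {p. prime p \<and> p dvd z})"

definition A_set :: "nat set \<Rightarrow> nat set" where
  "A_set E = {p. prime p \<and> (\<exists>k\<ge>1. \<forall>z\<in>E. z mod p = 0 \<or> z mod p = k mod p)}"

definition alpha :: "nat set \<Rightarrow> nat \<Rightarrow> nat" where
  "alpha E p = (THE a. a < p \<and> (\<forall>z\<in>E. z mod p = 0 \<or> z mod p = a)
        \<and> (p = 2 \<longrightarrow> a = 1) \<and> (p \<in> PiE_set E \<and> p \<noteq> 2 \<longrightarrow> a = 0))"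

end

theory Submission
  imports Defs "HOL-Number_Theory.Cong"
begin

(*
  In the Kirch topology the progressions x + b N0 with b squarefree and coprime to x form a
  neighbourhood base of x, and the closure of x + b N0 consists of the n >= 1 that, at every prime
  q dividing b, are divisible by q or congruent to x modulo q.  Hence F_E has a base of sets cut out
  by finitely many local conditions "p divides n, or n = x (mod p) for every x in E prime to p".
  By the Chinese remainder theorem conditions at distinct primes are independent, so F_E <= F_F
  holds iff at every prime the local condition for F implies the one for E.  The residues allowed
  at p are all residues if p is in Pi_E or p = 2, the residues 0 and alpha_E(p) if p is in
  A_E - Pi_E, and 0 alone otherwise; comparing these prime by prime gives the three conditions.
*)

lemma squarefree_lcm:
  fixes a b :: "'a :: factorial_semiring_gcd"
  assumes "squarefree a" "squarefree b"
  shows "squarefree (lcm a b)"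
proof -
  have "a \<noteq> 0" "b \<noteq> 0"
    using assms by auto
  moreover have "lcm a b \<noteq> 0"
    using calculation by (simp add: lcm_eq_0_iff)
  ultimately show ?thesis
    using assms by (simp add: squarefree_factorial_semiring'' multiplicity_lcm)
qed

lemma coprime_lcm_right:
  fixes a b c :: "'a :: semiring_gcd"
  assumes "coprime a b" "coprime a c"
  shows "coprime a (lcm b c)"
proof -
  have "coprime a (b * c)"
    using assms by simp
  moreover have "lcm b c dvd b * c"
    by (simp add: lcm_least)
  ultimately show ?thesis
    using coprime_divisors[of a a "lcm b c" "b * c"] by simp
qed

lemma squarefree_dvdI:
  fixes g m :: "'a :: factorial_semiring"
  assumes "squarefree g" and prime_dvd: "\<And>p. prime p \<Longrightarrow> p dvd g \<Longrightarrow> p dvd m"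
  shows "g dvd m"
proof (cases "m = 0")
  case False
  have "g \<noteq> 0"
    using assms(1) by auto
  then show ?thesis
  proof (rule multiplicity_le_imp_dvd)
    fix p :: 'a assume p: "prime p"
    show "multiplicity p g \<le> multiplicity p m"
    proof (cases "p dvd g")
      case True
      then have "multiplicity p m > 0"
        using prime_dvd p False by (simp add: prime_multiplicity_gt_zero_iff)
      moreover have "multiplicity p g \<le> 1"
        using assms(1) \<open>g \<noteq> 0\<close> p squarefree_factorial_semiring'' by blast
      ultimately show ?thesis by linarith
    qed (simp add: not_dvd_imp_multiplicity_0)
  qed
qed simp

lemma cong_squarefree_modulus:
  fixes g n x :: nat
  assumes "squarefree g" "\<And>q. prime q \<Longrightarrow> q dvd g \<Longrightarrow> [n = x] (mod q)"
  shows "[n = x] (mod g)"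
proof -
  have "[n = x] (mod g)" if "x \<le> n" "\<And>q. prime q \<Longrightarrow> q dvd g \<Longrightarrow> [n = x] (mod q)" for n x
    using that assms(1) by (simp add: cong_altdef_nat squarefree_dvdI)
  then show ?thesis
    using assms(2) by (metis cong_sym nat_le_linear)
qed

lemma mem_arith_prog: "m \<in> arith_prog a b \<longleftrightarrow> (\<exists>k. m = a + b * k)"
  unfolding arith_prog_def by auto

lemma arith_prog_mono: "b dvd c \<Longrightarrow> arith_prog a c \<subseteq> arith_prog a b"
  by (auto simp: mem_arith_prog elim!: dvdE)

lemma arith_prog_subset_of_mem:
  assumes "x \<in> arith_prog a b"
  shows "arith_prog x b \<subseteq> arith_prog a b"
proof
  fix y assume "y \<in> arith_prog x b"
  then obtain j where "y = x + b * j"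
    by (auto simp: mem_arith_prog)
  moreover obtain k where "x = a + b * k"
    using assms by (auto simp: mem_arith_prog)
  ultimately have "y = a + b * (k + j)"
    by (simp add: algebra_simps)
  then show "y \<in> arith_prog a b"
    using mem_arith_prog by blast
qed

lemma arith_prog_meet:
  fixes n x d b :: nat
  assumes "d \<ge> 1" "b \<ge> 1" "[n = x] (mod gcd d b)"
  shows "\<exists>y. y \<in> arith_prog n d \<and> y \<in> arith_prog x b"
proof -
  have meet: "\<exists>y. y \<in> arith_prog n d \<and> y \<in> arith_prog x b"
    if le: "n \<le> x" and d: "d \<ge> 1" and cong: "[n = x] (mod gcd d b)" for n x d b :: nat
  proof -
    have "gcd d b dvd x - n"
      using le cong_sym[OF cong] by (simp add: cong_altdef_nat)
    then obtain k where k: "x - n = gcd d b * k" ..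
    obtain u v where uv: "d * u = b * v + gcd d b"
      using bezout_nat[of d b] d by auto
    have "n + d * (u * k) = x + b * (v * k)"
      using arg_cong[OF uv, of "\<lambda>z. z * k"] k le by (simp add: algebra_simps)
    then show ?thesis
      unfolding mem_arith_prog by metis
  qed
  show ?thesis
  proof (cases "n \<le> x")
    case False
    then show ?thesis
      using meet[of x n b d] assms by (metis cong_sym gcd.commute nat_le_linear)
  qed (use meet assms in blast)
qed

lemma topspace_kirch_topology: "topspace kirch_topology = {1..}"
proof -
  have "n \<in> \<Union>kirch_base" if "n \<ge> 1" for n
  proof
    show "arith_prog n 1 \<in> kirch_base"
      unfolding kirch_base_def using that coprime_1_right squarefree_1 by blast
    show "n \<in> arith_prog n 1"
      by (simp add: mem_arith_prog)
  qed
  then have "{1..} \<subseteq> \<Union>kirch_base"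
    by auto
  moreover have "\<Union>kirch_base \<subseteq> {1..}"
    unfolding kirch_base_def arith_prog_def by auto
  ultimately show ?thesis
    unfolding kirch_topology_def by simp
qed

lemma openin_kirch_arith_prog:
  "a \<ge> 1 \<Longrightarrow> b \<ge> 1 \<Longrightarrow> coprime a b \<Longrightarrow> squarefree b \<Longrightarrow> openin kirch_topology (arith_prog a b)"
  unfolding kirch_topology_def by (rule topology_generated_by_Basis) (auto simp: kirch_base_def)

lemma openin_kirch_arith_prog_prime:
  assumes "x \<ge> 1" "prime q" "\<not> q dvd x"
  shows "openin kirch_topology (arith_prog x q)"
proof (rule openin_kirch_arith_prog)
  show "coprime x q"
    using assms(2,3) prime_imp_coprime coprime_commute by blast
qed (use assms prime_ge_1_nat squarefree_prime in auto)

lemma kirch_open_contains_arith_prog: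
  assumes "openin kirch_topology U" "x \<in> U"
  obtains b where "b \<ge> 1" "coprime x b" "squarefree b" "arith_prog x b \<subseteq> U"
proof -
  have "generate_topology_on kirch_base U"
    using assms(1) unfolding kirch_topology_def by (rule openin_topology_generated_by)
  then have "\<exists>b\<ge>1. coprime x b \<and> squarefree b \<and> arith_prog x b \<subseteq> U"
    using assms(2)
  proof (induction arbitrary: x)
    case (Int U V)
    then obtain b c where
      b: "b \<ge> 1" "coprime x b" "squarefree b" "arith_prog x b \<subseteq> U" and
      c: "c \<ge> 1" "coprime x c" "squarefree c" "arith_prog x c \<subseteq> V"
      by blast
    have "arith_prog x (lcm b c) \<subseteq> U \<inter> V"
      using b(4) c(4) arith_prog_mono[of b "lcm b c" x] arith_prog_mono[of c "lcm b c" x] by auto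
    moreover have "lcm b c \<ge> 1"
      using b(1) c(1) by (simp add: Suc_le_eq lcm_pos_nat)
    ultimately show ?case
      using coprime_lcm_right[OF b(2) c(2)] squarefree_lcm[OF b(3) c(3)] by blast
  next
    case (UN K)
    then show ?case by blast
  next
    case (Basis V)
    then obtain a b where V: "V = arith_prog a b" "a \<ge> 1" "b \<ge> 1" "coprime a b" "squarefree b"
      unfolding kirch_base_def by blast
    obtain k where "x = a + b * k"
      using Basis.prems V(1) by (auto simp: mem_arith_prog)
    then have "[a = x] (mod b)"
      by (simp add: cong_def)
    then have "coprime x b"
      using V(4) cong_imp_coprime by blast
    moreover have "arith_prog x b \<subseteq> V"
      using Basis.prems V(1) arith_prog_subset_of_mem by blast
    ultimately show ?case
      using V by blast
  qed simp
  then show ?thesis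
    using that by blast
qed

lemma in_kirch_closure_arith_progD:
  assumes "prime q" "q dvd b" "n \<in> kirch_topology closure_of arith_prog x b"
  shows "q dvd n \<or> [n = x] (mod q)"
proof (rule ccontr)
  assume "\<not> (q dvd n \<or> [n = x] (mod q))"
  then have n: "\<not> q dvd n" "\<not> [n = x] (mod q)"
    by auto
  have "n \<ge> 1"
    using assms(3) closure_of_subset_topspace topspace_kirch_topology by fastforce
  then have "openin kirch_topology (arith_prog n q)"
    using openin_kirch_arith_prog_prime assms(1) n(1) by blast
  moreover have "n \<in> arith_prog n q"
    by (simp add: mem_arith_prog)
  ultimately obtain y where "y \<in> arith_prog x b" "y \<in> arith_prog n q"
    using assms(3) unfolding in_closure_of by blast
  then obtain i j where y: "y = x + b * i" "y = n + q * j"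
    unfolding mem_arith_prog by blast
  obtain c where "b = q * c"
    using assms(2) ..
  then have "[y = x] (mod q)"
    using y(1) by (simp add: cong_def mult.assoc)
  moreover have "[y = n] (mod q)"
    using y(2) by (simp add: cong_def)
  ultimately show False
    using n(2) by (metis cong_sym cong_trans)
qed

lemma in_kirch_closure_arith_progI:
  assumes "n \<ge> 1" "b \<ge> 1" "squarefree b"
    and cong: "\<And>q. prime q \<Longrightarrow> q dvd b \<Longrightarrow> q dvd n \<or> [n = x] (mod q)"
  shows "n \<in> kirch_topology closure_of arith_prog x b"
  unfolding in_closure_of
proof (intro conjI allI impI)
  show "n \<in> topspace kirch_topology"
    using assms(1) topspace_kirch_topology by simp
  fix T assume "n \<in> T \<and> openin kirch_topology T"
  then obtain d where d: "d \<ge> 1" "coprime n d" "squarefree d" "arith_prog n d \<subseteq> T"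
    using kirch_open_contains_arith_prog by metis
  have "[n = x] (mod gcd d b)"
  proof (rule cong_squarefree_modulus)
    show "squarefree (gcd d b)"
      using d(3) squarefree_mono by (metis gcd_dvd1)
    fix q :: nat assume q: "prime q" "q dvd gcd d b"
    then have "\<not> q dvd n"
      using d(2) by (meson coprime_common_divisor dvd_trans gcd_dvd1 not_prime_unit)
    then show "[n = x] (mod q)"
      using cong q by (meson dvd_trans gcd_dvd2)
  qed
  then show "\<exists>y. y \<in> arith_prog x b \<and> y \<in> T"
    using arith_prog_meet[OF d(1) assms(2)] d(4) by blast
qed

lemma kirch_closure_arith_prog:
  assumes "b \<ge> 1" "squarefree b"
  shows "kirch_topology closure_of arith_prog x b =
    {n. n \<ge> 1 \<and> (\<forall>q. prime q \<longrightarrow> q dvd b \<longrightarrow> q dvd n \<or> [n = x] (mod q))}"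
proof (intro equalityI subsetI CollectI conjI allI impI)
  fix n assume n: "n \<in> kirch_topology closure_of arith_prog x b"
  then show "n \<ge> 1"
    using closure_of_subset_topspace topspace_kirch_topology by fastforce
  show "q dvd n \<or> [n = x] (mod q)" if "prime q" "q dvd b" for q
    using in_kirch_closure_arith_progD[OF that n] .
qed (use in_kirch_closure_arith_progI assms in blast)

(* The local condition at p: n lies in the closure of x + p N0 for every x in E prime to p. *)

definition adherent_mod :: "nat set \<Rightarrow> nat \<Rightarrow> nat \<Rightarrow> bool" where
  "adherent_mod E p n \<longleftrightarrow> p dvd n \<or> (\<forall>x\<in>E. \<not> p dvd x \<longrightarrow> [n = x] (mod p))"

definition adherent_set :: "nat set \<Rightarrow> nat set \<Rightarrow> nat set" where
  "adherent_set E Q = {n. n \<ge> 1 \<and> (\<forall>q\<in>Q. adherent_mod E q n)}"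

lemma adherent_mod_cong:
  assumes "[m = n] (mod p)"
  shows "adherent_mod E p m \<longleftrightarrow> adherent_mod E p n"
  using assms cong_dvd_iff cong_sym cong_trans unfolding adherent_mod_def by metis

lemma filterF_upward_closed:
  "A \<in> filterF E \<Longrightarrow> A \<subseteq> B \<Longrightarrow> B \<subseteq> {1..} \<Longrightarrow> B \<in> filterF E"
  unfolding filterF_def by blast

lemma adherent_set_in_filterF:
  assumes "0 \<notin> E" "E \<noteq> {}" "finite Q" "Q \<subseteq> {p. prime p}"
  shows "adherent_set E Q \<in> filterF E"
proof -
  define b where "b x = \<Prod>{q\<in>Q. \<not> q dvd x}" for x
  have b: "b x \<ge> 1" "coprime x (b x)" "squarefree (b x)" for x
  proof -
    have primes: "prime q" if "q \<in> {q\<in>Q. \<not> q dvd x}" for q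
      using that assms(4) by blast
    have "0 < \<Prod>{q\<in>Q. \<not> q dvd x}"
      by (rule prod_pos) (use primes prime_gt_0_nat in blast)
    then show "b x \<ge> 1"
      unfolding b_def by simp
    show "coprime x (b x)"
      unfolding b_def using primes by (auto intro!: prod_coprime_right simp: prime_imp_coprime coprime_commute)
    show "squarefree (b x)"
      unfolding b_def using primes
      by (intro squarefree_prod_coprime) (auto simp: primes_coprime squarefree_prime)
  qed
  have "arith_prog x (b x) \<in> tau_at x" if "x \<in> E" for x
  proof -
    have "x \<ge> 1"
      using that assms(1) by (cases x) auto
    then show ?thesis
      unfolding tau_at_def using openin_kirch_arith_prog b by (simp add: mem_arith_prog)
  qed
  moreover have "(\<Inter>x\<in>E. kirch_topology closure_of arith_prog x (b x)) \<subseteq> adherent_set E Q"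
  proof
    fix n assume n: "n \<in> (\<Inter>x\<in>E. kirch_topology closure_of arith_prog x (b x))"
    have closure: "n \<ge> 1 \<and> (\<forall>q. prime q \<longrightarrow> q dvd b x \<longrightarrow> q dvd n \<or> [n = x] (mod q))" if "x \<in> E" for x
      using n that kirch_closure_arith_prog[OF b(1) b(3)] by blast
    have "q dvd b x" if "q \<in> Q" "\<not> q dvd x" for q x
      unfolding b_def using that assms(3) by (intro dvd_prodI) auto
    then show "n \<in> adherent_set E Q"
      unfolding adherent_set_def adherent_mod_def using closure assms(2,4) by blast
  qed
  moreover have "adherent_set E Q \<subseteq> {1..}"
    unfolding adherent_set_def by auto
  ultimately show ?thesis
    unfolding filterF_def by (intro CollectI conjI exI[of _ "\<lambda>x. arith_prog x (b x)"]) auto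
qed

lemma filterF_obtain_adherent_set:
  assumes "finite E" "B \<in> filterF E"
  obtains Q where "finite Q" "Q \<subseteq> {p. prime p}" "adherent_set E Q \<subseteq> B"
proof -
  obtain U where U: "\<forall>x\<in>E. U x \<in> tau_at x" and UB: "(\<Inter>x\<in>E. kirch_topology closure_of U x) \<subseteq> B"
    using assms(2) unfolding filterF_def by blast
  have "\<forall>x\<in>E. \<exists>b. b \<ge> 1 \<and> coprime x b \<and> squarefree b \<and> arith_prog x b \<subseteq> U x"
    using U kirch_open_contains_arith_prog unfolding tau_at_def by (metis mem_Collect_eq)
  then obtain b where b: "\<And>x. x \<in> E \<Longrightarrow>
      b x \<ge> 1 \<and> coprime x (b x) \<and> squarefree (b x) \<and> arith_prog x (b x) \<subseteq> U x"
    by metis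
  define Q where "Q = (\<Union>x\<in>E. prime_factors (b x))"
  have "adherent_set E Q \<subseteq> B"
  proof
    fix n assume n: "n \<in> adherent_set E Q"
    have "n \<in> kirch_topology closure_of U x" if x: "x \<in> E" for x
    proof -
      have "q dvd n \<or> [n = x] (mod q)" if "prime q" "q dvd b x" for q
      proof -
        have "q \<in> prime_factors (b x)"
          using that b[OF x] by (auto simp: in_prime_factors_iff)
        then have "q \<in> Q"
          unfolding Q_def using x by blast
        moreover have "\<not> q dvd x"
          using that b[OF x] by (meson coprime_common_divisor not_prime_unit)
        ultimately show ?thesis
          using n x unfolding adherent_set_def adherent_mod_def by blast
      qed
      then have "n \<in> kirch_topology closure_of arith_prog x (b x)"
        using n b[OF x] kirch_closure_arith_prog unfolding adherent_set_def by auto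
      then show ?thesis
        using closure_of_mono b[OF x] by blast
    qed
    then show "n \<in> B"
      using UB by blast
  qed
  moreover have "finite Q" "Q \<subseteq> {p. prime p}"
    unfolding Q_def using assms(1) by (auto simp: in_prime_factors_iff)
  ultimately show ?thesis
    using that by blast
qed

lemma cong_exists_multiple:
  fixes M p n :: nat
  assumes "coprime M p"
  obtains m where "M dvd m" "[m = n] (mod p)"
proof -
  obtain s where "[M * s = 1] (mod p)"
    using cong_solve_coprime_nat[OF assms] by auto
  then have "[M * s * n = n] (mod p)"
    using cong_mult[of "M * s" 1 p n n] by simp
  then show ?thesis
    using that[of "M * s * n"] by (simp add: mult.assoc)
qed

lemma adherent_mod_of_filterF_subset:
  assumes "finite F" "0 \<notin> E" "E \<noteq> {}" "filterF E \<subseteq> filterF F"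
    and p: "prime p" and n: "adherent_mod F p n"
  shows "adherent_mod E p n"
proof (cases "p dvd n")
  case False
  have "adherent_set E {p} \<in> filterF F"
    using assms(4) adherent_set_in_filterF[of E "{p}"] assms(2,3) p by blast
  then obtain Q where Q: "finite Q" "Q \<subseteq> {p. prime p}" "adherent_set F Q \<subseteq> adherent_set E {p}"
    using filterF_obtain_adherent_set assms(1) by blast
  \<comment> \<open>Chinese remainder step: \<open>m\<close> agrees with \<open>n\<close> at \<open>p\<close> and is divisible by the other primes of \<open>Q\<close>.\<close>
  define M where "M = \<Prod>(Q - {p})"
  have "coprime M p"
    unfolding M_def using Q(2) p by (intro prod_coprime_left primes_coprime) auto
  then obtain m where m: "M dvd m" "[m = n] (mod p)"
    using cong_exists_multiple by metis
  have "adherent_mod F q m" if "q \<in> Q" for q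
  proof (cases "q = p")
    case False
    then have "q dvd M"
      unfolding M_def using that Q(1) dvd_prodI[of "Q - {p}" q "\<lambda>x. x"] by simp
    then have "q dvd m"
      using m(1) by (rule dvd_trans)
    then show ?thesis
      unfolding adherent_mod_def by blast
  qed (use adherent_mod_cong[OF m(2)] n in blast)
  moreover have "m \<ge> 1"
    using False cong_dvd_iff[OF m(2)] by (cases m) auto
  ultimately have "m \<in> adherent_set E {p}"
    using Q(3) unfolding adherent_set_def by blast
  then show ?thesis
    using adherent_mod_cong[OF m(2)] unfolding adherent_set_def by blast
qed (simp add: adherent_mod_def)

lemma filterF_subset_iff_adherent_mod:
  assumes "finite E" "finite F" "0 \<notin> E" "0 \<notin> F" "E \<noteq> {}" "F \<noteq> {}"
  shows "filterF E \<subseteq> filterF F \<longleftrightarrow>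
    (\<forall>p n. prime p \<longrightarrow> adherent_mod F p n \<longrightarrow> adherent_mod E p n)"
proof
  assume "filterF E \<subseteq> filterF F"
  then show "\<forall>p n. prime p \<longrightarrow> adherent_mod F p n \<longrightarrow> adherent_mod E p n"
    using adherent_mod_of_filterF_subset assms(2,3,5) by blast
next
  assume adh: "\<forall>p n. prime p \<longrightarrow> adherent_mod F p n \<longrightarrow> adherent_mod E p n"
  show "filterF E \<subseteq> filterF F"
  proof
    fix B assume B: "B \<in> filterF E"
    then obtain Q where Q: "finite Q" "Q \<subseteq> {p. prime p}" "adherent_set E Q \<subseteq> B"
      using filterF_obtain_adherent_set assms(1) by blast
    have "adherent_set F Q \<subseteq> adherent_set E Q"
      using adh Q(2) unfolding adherent_set_def by blast
    moreover have "B \<subseteq> {1..}"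
      using B unfolding filterF_def by blast
    ultimately show "B \<in> filterF F"
      using filterF_upward_closed adherent_set_in_filterF[OF assms(4,6) Q(1,2)] Q(3) by blast
  qed
qed

lemma mem_PiE_set_iff: "prime p \<Longrightarrow> p \<in> PiE_set E \<longleftrightarrow> (\<forall>z\<in>E. p dvd z)"
  unfolding PiE_set_def by blast

lemma PiE_set_imp_A_set: "prime p \<Longrightarrow> p \<in> PiE_set E \<Longrightarrow> p \<in> A_set E"
  unfolding A_set_def PiE_set_def by (auto intro!: exI[of _ 1])

lemma two_in_A_set: "2 \<in> A_set E"
  unfolding A_set_def by (auto intro!: exI[of _ 1])

lemma A_set_iff_cong:
  assumes "prime p" "x \<in> E" "\<not> p dvd x"
  shows "p \<in> A_set E \<longleftrightarrow> (\<forall>z\<in>E. \<not> p dvd z \<longrightarrow> [z = x] (mod p))"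
proof
  assume "p \<in> A_set E"
  then obtain k where k: "\<forall>z\<in>E. z mod p = 0 \<or> z mod p = k mod p"
    unfolding A_set_def by blast
  then have "x mod p = k mod p"
    using assms(2,3) by (auto simp: dvd_eq_mod_eq_0)
  then show "\<forall>z\<in>E. \<not> p dvd z \<longrightarrow> [z = x] (mod p)"
    using k by (auto simp: cong_def dvd_eq_mod_eq_0)
next
  assume "\<forall>z\<in>E. \<not> p dvd z \<longrightarrow> [z = x] (mod p)"
  moreover have "x \<ge> 1"
    using assms(3) by (cases x) auto
  ultimately show "p \<in> A_set E"
    unfolding A_set_def cong_def using assms(1) by (auto simp: dvd_eq_mod_eq_0 intro!: exI[of _ x])
qed

lemma alpha_two: "alpha E 2 = 1"
  unfolding alpha_def by (rule the_equality) (auto simp: mod2_eq_if)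

lemma alpha_eq_mod:
  assumes "prime p" "p \<in> A_set E" "x \<in> E" "\<not> p dvd x"
  shows "alpha E p = x mod p"
proof (cases "p = 2")
  case True
  then show ?thesis
    using assms(4) alpha_two by (simp add: odd_iff_mod_2_eq_one)
next
  case False
  have cong: "\<forall>z\<in>E. \<not> p dvd z \<longrightarrow> [z = x] (mod p)"
    using A_set_iff_cong assms by blast
  have "p \<notin> PiE_set E"
    using assms(3,4) unfolding PiE_set_def by blast
  show ?thesis
    unfolding alpha_def
  proof (rule the_equality)
    show "x mod p < p \<and> (\<forall>z\<in>E. z mod p = 0 \<or> z mod p = x mod p) \<and> (p = 2 \<longrightarrow> x mod p = 1)
        \<and> (p \<in> PiE_set E \<and> p \<noteq> 2 \<longrightarrow> x mod p = 0)"
      using cong False assms(1) prime_gt_0_nat \<open>p \<notin> PiE_set E\<close> by (auto simp: cong_def dvd_eq_mod_eq_0)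
  next
    fix a assume "a < p \<and> (\<forall>z\<in>E. z mod p = 0 \<or> z mod p = a) \<and> (p = 2 \<longrightarrow> a = 1)
        \<and> (p \<in> PiE_set E \<and> p \<noteq> 2 \<longrightarrow> a = 0)"
    then show "a = x mod p"
      using assms(3,4) by (auto simp: dvd_eq_mod_eq_0)
  qed
qed

lemma adherent_mod_two: "adherent_mod E 2 n"
  unfolding adherent_mod_def cong_def by (auto simp: mod2_eq_if)

lemma adherent_mod_iff:
  assumes "prime p"
  shows "adherent_mod E p n \<longleftrightarrow>
    p dvd n \<or> p \<in> PiE_set E \<or> (p \<in> A_set E \<and> n mod p = alpha E p)"
proof (cases "p \<in> PiE_set E")
  case True
  then show ?thesis
    using assms mem_PiE_set_iff unfolding adherent_mod_def by blast
next
  case notPi: False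
  then obtain x where x: "x \<in> E" "\<not> p dvd x"
    using assms mem_PiE_set_iff by blast
  show ?thesis
  proof (cases "p \<in> A_set E")
    case True
    then have "\<forall>z\<in>E. \<not> p dvd z \<longrightarrow> [z = x] (mod p)"
      using A_set_iff_cong assms x by blast
    then have "(\<forall>z\<in>E. \<not> p dvd z \<longrightarrow> [n = z] (mod p)) \<longleftrightarrow> [n = x] (mod p)"
      using x by (meson cong_sym cong_trans)
    moreover have "alpha E p = x mod p"
      using alpha_eq_mod assms True x by blast
    ultimately show ?thesis
      using True notPi unfolding adherent_mod_def cong_def by auto
  next
    case False
    have "\<not> (\<forall>z\<in>E. \<not> p dvd z \<longrightarrow> [n = z] (mod p))"
    proof
      assume "\<forall>z\<in>E. \<not> p dvd z \<longrightarrow> [n = z] (mod p)"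
      then have "\<forall>z\<in>E. \<not> p dvd z \<longrightarrow> [z = x] (mod p)"
        using x by (meson cong_sym cong_trans)
      then show False
        using False A_set_iff_cong[OF assms x] by blast
    qed
    then show ?thesis
      using False notPi unfolding adherent_mod_def by blast
  qed
qed

lemma alpha_lt_not_dvd:
  assumes "prime p" "p \<in> A_set E" "p \<notin> PiE_set E"
  shows "alpha E p < p" "\<not> p dvd alpha E p"
proof -
  obtain x where x: "x \<in> E" "\<not> p dvd x"
    using assms(1,3) mem_PiE_set_iff by blast
  then have "alpha E p = x mod p"
    using alpha_eq_mod assms(1,2) by blast
  then show "alpha E p < p" "\<not> p dvd alpha E p"
    using x(2) assms(1) prime_gt_0_nat by (simp_all add: dvd_eq_mod_eq_0)
qed

lemma PiE_set_of_adherent_mod_all: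
  assumes "prime p" "p \<noteq> 2" "\<And>n. adherent_mod E p n"
  shows "p \<in> PiE_set E"
proof (rule ccontr)
  assume "p \<notin> PiE_set E"
  moreover have "p > 2"
    using assms(1,2) prime_ge_2_nat by (simp add: order_less_le)
  then have "\<not> p dvd 1" "\<not> p dvd 2"
    by (auto dest: dvd_imp_le)
  ultimately have "1 mod p = alpha E p" "2 mod p = alpha E p"
    using assms(3)[of 1] assms(3)[of 2] adherent_mod_iff[OF assms(1)] by blast+
  then show False
    using \<open>p > 2\<close> by simp
qed

lemma adherent_mod_mono_iff:
  assumes "prime p"
  shows "(\<forall>n. adherent_mod F p n \<longrightarrow> adherent_mod E p n) \<longleftrightarrow>
    (p \<in> A_set F \<longrightarrow> p \<in> A_set E) \<and> (p \<in> PiE_set F - {2} \<longrightarrow> p \<in> PiE_set E) \<and>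
    (p \<in> A_set F - PiE_set E \<longrightarrow> alpha E p = alpha F p)"
proof (cases "p = 2")
  case True
  then show ?thesis
    using adherent_mod_two two_in_A_set alpha_two by simp
next
  case False
  note adh_iff = adherent_mod_iff[OF assms]
  show ?thesis
  proof
    assume mono: "\<forall>n. adherent_mod F p n \<longrightarrow> adherent_mod E p n"
    have Pi: "p \<in> PiE_set E" if "p \<in> PiE_set F"
      using PiE_set_of_adherent_mod_all[OF assms False] mono that adh_iff by blast
    \<comment> \<open>Away from both \<open>PiE_set\<close>s, test the inclusion at the residue \<open>alpha F p\<close> allowed by \<open>F\<close>.\<close>
    have A_alpha: "p \<in> A_set E \<and> alpha E p = alpha F p"
      if "p \<in> A_set F" "p \<notin> PiE_set F" "p \<notin> PiE_set E"
    proof -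
      have "adherent_mod F p (alpha F p)"
        using adh_iff alpha_lt_not_dvd[OF assms] that by simp
      then have "adherent_mod E p (alpha F p)"
        using mono by blast
      then show ?thesis
        using adh_iff alpha_lt_not_dvd[OF assms] that by simp
    qed
    show "(p \<in> A_set F \<longrightarrow> p \<in> A_set E) \<and> (p \<in> PiE_set F - {2} \<longrightarrow> p \<in> PiE_set E) \<and>
      (p \<in> A_set F - PiE_set E \<longrightarrow> alpha E p = alpha F p)"
      using Pi A_alpha PiE_set_imp_A_set[OF assms] by blast
  next
    assume "(p \<in> A_set F \<longrightarrow> p \<in> A_set E) \<and> (p \<in> PiE_set F - {2} \<longrightarrow> p \<in> PiE_set E) \<and>
      (p \<in> A_set F - PiE_set E \<longrightarrow> alpha E p = alpha F p)"
    then show "\<forall>n. adherent_mod F p n \<longrightarrow> adherent_mod E p n"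
      using False adh_iff by auto
  qed
qed

theorem lemma3p5:
  fixes E F :: "nat set"
  assumes "finite E" "finite F" "0 \<notin> E" "0 \<notin> F"
    and "card E \<ge> 2" "card F \<ge> 2"
  shows "filterF E \<subseteq> filterF F \<longleftrightarrow>
    (A_set F \<subseteq> A_set E \<and> PiE_set F - {2} \<subseteq> PiE_set E \<and>
     (\<forall>p \<in> A_set F - PiE_set E. alpha E p = alpha F p))"
proof -
  have "E \<noteq> {}" "F \<noteq> {}"
    using assms(5,6) by auto
  have primes: "prime p" if "p \<in> A_set F \<union> PiE_set F" for p
    using that \<open>F \<noteq> {}\<close> unfolding A_set_def PiE_set_def by auto
  have "filterF E \<subseteq> filterF F \<longleftrightarrow>
      (\<forall>p. prime p \<longrightarrow> (\<forall>n. adherent_mod F p n \<longrightarrow> adherent_mod E p n))"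
    using filterF_subset_iff_adherent_mod[OF assms(1-4) \<open>E \<noteq> {}\<close> \<open>F \<noteq> {}\<close>] by blast
  also have "\<dots> \<longleftrightarrow> (\<forall>p. prime p \<longrightarrow>
      (p \<in> A_set F \<longrightarrow> p \<in> A_set E) \<and> (p \<in> PiE_set F - {2} \<longrightarrow> p \<in> PiE_set E) \<and>
      (p \<in> A_set F - PiE_set E \<longrightarrow> alpha E p = alpha F p))"
    by (simp add: adherent_mod_mono_iff)
  also have "\<dots> \<longleftrightarrow> A_set F \<subseteq> A_set E \<and> PiE_set F - {2} \<subseteq> PiE_set E \<and>
      (\<forall>p \<in> A_set F - PiE_set E. alpha E p = alpha F p)"
    using primes by blast
  finally show ?thesis .
qed

end
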